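(* Let $d\ge1$, let $\mathcal T'$ be a finite proper subtree of the dyadic tree of $[0,1]^d$, and let $\Lambda_{\mathcal T'}$ be its set of outer leaves. Let $\mathcal B(\Lambda_{\mathcal T'})$ be the set of common boundaries of the cubes in $\Lambda_{\mathcal T'}$, i.e. the set of points belonging to (the closures of) at least two distinct cubes of $\Lambda_{\mathcal T'}$. Then its $(d-1)$-dimensional surface area satisfies $$|\mathcal B(\Lambda_{\mathcal T'})|\le 2^{d+1}d\,(\#\mathcal T')^{1/d}.$$
   Context: For $j\ge0$, the dyadic cubes of $[0,1]^d$ at scale $j$ are the $2^{jd}$ cubes $\prod_{\ell=1}^d[m_\ell2^{-j},(m_\ell+1)2^{-j}]$, $m_\ell\in\{0,\dots,2^j-1\}$. They form a tree rooted at $[0,1]^d$ whose children of a scale-$j$ cube are the $2^d$ scale-$(j+1)$ cubes contained in it. A proper subtree is a set of nodes containing the root and the parent of each of its non-root members. The outer leaves of a proper subtree $\mathcal T'$ are the cubes not in $\mathcal T'$ whose parent is in $\mathcal T'$; they form a partition of $[0,1]^d$ (up to boundaries). Surface area means $(d-1)$-dimensional Hausdorff measure. *)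

theory Defs
  imports "HOL-Analysis.Analysis"
begin

definition hausdorff_const :: "nat \<Rightarrow> real" where
  "hausdorff_const s = pi powr (real s / 2) / Gamma (real s / 2 + 1) / 2 ^ s"

text \<open>Contribution of one covering set: the empty set contributes 0 (the usual
  convention diam(empty)^s = 0, also for s = 0).\<close>
definition hcontrib :: "nat \<Rightarrow> 'a::metric_space set \<Rightarrow> ennreal" where
  "hcontrib s U = (if U = {} then 0 else ennreal (hausdorff_const s * diameter U ^ s))"

definition hausdorff_pre :: "nat \<Rightarrow> real \<Rightarrow> 'a::metric_space set \<Rightarrow> ennreal" where
  "hausdorff_pre s \<delta> A =
     (INF U \<in> {U :: nat \<Rightarrow> 'a set. A \<subseteq> (\<Union>i. U i) \<and> (\<forall>i. bounded (U i) \<and> diameter (U i) \<le> \<delta>)}.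
        (\<Sum>i. hcontrib s (U i)))"

definition hausdorff_measure :: "nat \<Rightarrow> 'a::metric_space set \<Rightarrow> ennreal" where
  "hausdorff_measure s A = (SUP \<delta> \<in> {0<..}. hausdorff_pre s \<delta> A)"

text \<open>A node is a pair (j, m): scale j and integer corner m with 0 <= m i < 2^j.\<close>
type_synonym 'n dnode = "nat \<times> ('n \<Rightarrow> nat)"

definition dyadic_nodes :: "'n dnode set" where
  "dyadic_nodes = {(j, m). \<forall>i. m i < 2 ^ j}"

definition dyadic_cube :: "'n::finite dnode \<Rightarrow> (real ^ 'n) set" where
  "dyadic_cube q = {x. \<forall>i. real (snd q i) / 2 ^ fst q \<le> x $ i \<and> x $ i \<le> (real (snd q i) + 1) / 2 ^ fst q}"

definition dyadic_root :: "'n dnode" where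
  "dyadic_root = (0, (\<lambda>_. 0))"

definition dyadic_parent :: "'n dnode \<Rightarrow> 'n dnode" where
  "dyadic_parent q = (fst q - 1, (\<lambda>i. snd q i div 2))"

definition proper_subtree :: "'n dnode set \<Rightarrow> bool" where
  "proper_subtree T \<longleftrightarrow> T \<subseteq> dyadic_nodes \<and> dyadic_root \<in> T \<and>
     (\<forall>q\<in>T. q \<noteq> dyadic_root \<longrightarrow> dyadic_parent q \<in> T)"

definition outer_leaves :: "'n dnode set \<Rightarrow> 'n dnode set" where
  "outer_leaves T = {q \<in> dyadic_nodes. q \<noteq> dyadic_root \<and> q \<notin> T \<and> dyadic_parent q \<in> T}"

definition common_boundary :: "'n::finite dnode set \<Rightarrow> (real ^ 'n) set" where
  "common_boundary \<Lambda> = {x. \<exists>q1\<in>\<Lambda>. \<exists>q2\<in>\<Lambda>. q1 \<noteq> q2 \<and> x \<in> dyadic_cube q1 \<and> x \<in> dyadic_cube q2}"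

end

theory Submission
  imports Defs
begin

(* A point common to two distinct outer leaves lies on a grid hyperplane x_i = n / 2^j separating
   two cubes of the level j of the coarser leaf. Writing n = (2u + 1) 2^t, that hyperplane is the
   central section {x in q. x_i = centre of q in direction i} of their common ancestor q at level
   j - t - 1, and q belongs to T. So the common boundary is covered by the d * #T central sections of
   the cubes of T. A central section of a cube of side s is a (d-1)-cube of side s; covering it by the
   balls around a fine body-centred lattice (whose covering radius is sqrt((d-1)/8) times the mesh)
   bounds its (d-1)-dimensional measure by (2 s)^(d-1). Finally the sum over q in T of
   2^(-(d-1) level(q)) is at most 4 (#T)^(1/d): the levels j <= J contain at most 2^(jd) nodes each,
   the deeper nodes are at most #T, and J is chosen with 2^(Jd) <= #T < 2^((J+1)d). *)


section \<open>Fine covers and the Hausdorff measure\<close>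

definition has_fine_cover :: "nat \<Rightarrow> real \<Rightarrow> 'a::metric_space set \<Rightarrow> ennreal \<Rightarrow> bool" where
  "has_fine_cover s \<delta> A b \<longleftrightarrow>
     (\<exists>F. finite F \<and> A \<subseteq> \<Union>F \<and> (\<forall>U\<in>F. bounded U \<and> diameter U \<le> \<delta>) \<and> (\<Sum>U\<in>F. hcontrib s U) \<le> b)"

lemma has_fine_cover_subset:
  "has_fine_cover s \<delta> B b \<Longrightarrow> A \<subseteq> B \<Longrightarrow> has_fine_cover s \<delta> A b"
  unfolding has_fine_cover_def by blast

lemma has_fine_cover_UN:
  assumes I: "finite I" and cov: "\<And>i. i \<in> I \<Longrightarrow> has_fine_cover s \<delta> (A i) (b i)"
  shows "has_fine_cover s \<delta> (\<Union>i\<in>I. A i) (\<Sum>i\<in>I. b i)"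
proof -
  obtain F where F: "\<And>i. i \<in> I \<Longrightarrow> finite (F i) \<and> A i \<subseteq> \<Union>(F i) \<and>
      (\<forall>U\<in>F i. bounded U \<and> diameter U \<le> \<delta>) \<and> (\<Sum>U\<in>F i. hcontrib s U) \<le> b i"
    using cov unfolding has_fine_cover_def by metis
  have fin: "finite (Sigma I F)" using I F by blast
  have "(\<Sum>U\<in>snd ` Sigma I F. hcontrib s U) \<le> (\<Sum>p\<in>Sigma I F. hcontrib s (snd p))"
    using sum_image_le[OF fin, of "hcontrib s" snd] by (simp add: o_def)
  also have "\<dots> = (\<Sum>i\<in>I. \<Sum>U\<in>F i. hcontrib s U)"
    using I F by (subst sum.Sigma) (auto simp: split_beta)
  also have "\<dots> \<le> (\<Sum>i\<in>I. b i)"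
    using F by (intro sum_mono) blast
  finally show ?thesis
    unfolding has_fine_cover_def using fin F
    by (intro exI[of _ "snd ` Sigma I F"]) fastforce
qed

lemma hausdorff_pre_le_fine_cover:
  assumes "has_fine_cover s \<delta> A b" and "0 \<le> \<delta>"
  shows "hausdorff_pre s \<delta> A \<le> b"
proof -
  obtain F where F: "finite F" "A \<subseteq> \<Union>F" "\<forall>U\<in>F. bounded U \<and> diameter U \<le> \<delta>"
    and sum_F: "(\<Sum>U\<in>F. hcontrib s U) \<le> b"
    using assms(1) unfolding has_fine_cover_def by blast
  obtain f where f: "bij_betw f {..<card F} F"
    using ex_bij_betw_nat_finite[OF \<open>finite F\<close>] by (auto simp: atLeast0LessThan)
  define V where "V n = (if n < card F then f n else {})" for n
  have "A \<subseteq> (\<Union>n. V n)"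
  proof
    fix x assume "x \<in> A"
    then obtain U where "U \<in> F" "x \<in> U" using F(2) by blast
    then obtain n where "n < card F" "f n = U"
      using f by (metis bij_betw_def imageE lessThan_iff)
    then show "x \<in> (\<Union>n. V n)" using \<open>x \<in> U\<close> by (auto simp: V_def)
  qed
  moreover have "\<forall>n. bounded (V n) \<and> diameter (V n) \<le> \<delta>"
    using F(3) \<open>0 \<le> \<delta>\<close> f by (auto simp: V_def bij_betw_def)
  ultimately have "hausdorff_pre s \<delta> A \<le> (\<Sum>n. hcontrib s (V n))"
    unfolding hausdorff_pre_def by (intro INF_lower) blast
  also have "(\<Sum>n. hcontrib s (V n)) = (\<Sum>n<card F. hcontrib s (f n))"
    by (subst suminf_finite[of "{..<card F}"]) (auto simp: V_def hcontrib_def)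
  also have "\<dots> = (\<Sum>U\<in>F. hcontrib s U)"
    using sum.reindex_bij_betw[OF f] by simp
  finally show ?thesis using sum_F by simp
qed

lemma hausdorff_measure_le_fine_covers:
  assumes "\<And>\<delta>. \<delta> > 0 \<Longrightarrow> has_fine_cover s \<delta> A b"
  shows "hausdorff_measure s A \<le> b"
  unfolding hausdorff_measure_def
  using assms hausdorff_pre_le_fine_cover by (fastforce intro: SUP_least)

section \<open>Numerical estimates\<close>

lemma one_plus_inverse_powr_le_3:
  assumes "(k::real) > 0"
  shows "(1 + 1/k) powr k \<le> 3"
proof -
  have "1 + 1/k > 0" using assms by (intro add_pos_pos) auto
  then have "(1 + 1/k) powr k = exp (k * ln (1 + 1/k))"
    by (simp add: powr_def)
  also have "\<dots> \<le> exp (k * (1/k))"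
    using assms ln_add_one_self_le_self[of "1/k"] by (intro exp_mono mult_left_mono) auto
  finally show ?thesis using assms exp_le by simp
qed

lemma Gamma_three_halves: "Gamma (3/2 :: real) = sqrt pi / 2"
proof -
  have "(1/2::real) \<notin> \<int>\<^sub>\<le>\<^sub>0" using nonpos_Ints_nonpos[of "1/2::real"] by auto
  then show ?thesis using Gamma_plus1[of "1/2::real"] Gamma_one_half_real by simp
qed

lemma Gamma_two: "Gamma (2 :: real) = 1"
  using Gamma_fact[of 1] by simp

lemma Gamma_ge_powr_step:
  assumes k: "(k::real) > 0" and IH: "(k/3) powr k \<le> Gamma (k + 1)"
  shows "((k + 1)/3) powr (k + 1) \<le> Gamma (k + 2)"
proof -
  have "(k + 1)/3 = (k/3) * (1 + 1/k)" using k by (simp add: field_simps)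
  then have "((k + 1)/3) powr k = (k/3) powr k * (1 + 1/k) powr k"
    by (simp only: powr_mult)
  also have "\<dots> \<le> (k/3) powr k * 3"
    using one_plus_inverse_powr_le_3[OF k] by (intro mult_left_mono) auto
  finally have "((k + 1)/3) powr (k + 1) \<le> (k + 1) * (k/3) powr k"
    using k by (simp add: powr_add)
  also have "\<dots> \<le> (k + 1) * Gamma (k + 1)"
    using IH k by (intro mult_left_mono) auto
  also have "\<dots> = Gamma (k + 2)"
  proof -
    have "k + 1 \<notin> \<int>\<^sub>\<le>\<^sub>0" using k nonpos_Ints_nonpos[of "k + 1"] by auto
    then show ?thesis using Gamma_plus1[of "k + 1"] by (simp add: add.commute)
  qed
  finally show ?thesis .
qed

lemma Gamma_half_nat_ge_powr:
  assumes "m \<ge> 1"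
  shows "(real m / 6) powr (real m / 2) \<le> Gamma (real m / 2 + 1)"
  using assms
proof (induction m rule: less_induct)
  case (less m)
  consider "m = 1" | "m = 2" | "m \<ge> 3" using less.prems by linarith
  then show ?case
  proof cases
    case 1
    have "sqrt (1/6) \<le> sqrt (pi/4)" using pi_gt3 by (intro real_sqrt_le_mono) simp
    then show ?thesis
      using 1 Gamma_three_halves by (simp add: powr_half_sqrt real_sqrt_divide)
  next
    case 2
    then show ?thesis using Gamma_two by simp
  next
    case 3
    define k where "k = real (m - 2) / 2"
    have "(k/3) powr k \<le> Gamma (k + 1)"
      using less.IH[of "m - 2"] 3 by (simp add: k_def)
    then have "((k + 1)/3) powr (k + 1) \<le> Gamma (k + 2)"
      using 3 by (intro Gamma_ge_powr_step) (auto simp: k_def)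
    moreover have "k + 1 = real m / 2" and "k + 2 = real m / 2 + 1"
      using 3 by (simp_all add: k_def diff_divide_distrib)
    ultimately show ?thesis by simp
  qed
qed

lemma sixteen_div_three_pi_powr_ge:
  assumes "x \<ge> 3/2"
  shows "31/15 \<le> (16 / (3 * pi)) powr x"
proof -
  define r where "r = 16 / (3 * pi)"
  have r: "1.69 \<le> r"
    using pi_approx(2) by (simp add: r_def le_divide_eq)
  have "1.3 = sqrt (1.69::real)"
    by (rule real_sqrt_unique[symmetric]) (simp_all add: power2_eq_square)
  also have "\<dots> \<le> sqrt r" using r by (rule real_sqrt_le_mono)
  finally have "1.69 * 1.3 \<le> r * sqrt r" using r by (intro mult_mono) auto
  also have "r * sqrt r = r powr (3/2)"
    using r by (simp add: powr_add[of r 1 "1/2", simplified] powr_half_sqrt)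
  also have "\<dots> \<le> r powr x" using r assms by (intro powr_mono) auto
  finally show ?thesis by (simp add: r_def)
qed

lemma hausdorff_const_nonneg: "hausdorff_const m \<ge> 0"
  unfolding hausdorff_const_def by (auto intro!: divide_nonneg_nonneg)

lemma pi_mul_powr_div_Gamma_le:
  assumes x: "x \<ge> 3/2" and G: "(x/3) powr x \<le> Gamma (x + 1)"
  shows "(pi * x) powr x / Gamma (x + 1) * (31/15) \<le> 16 powr x"
proof -
  have "(pi * x) powr x / Gamma (x + 1) \<le> (pi * x) powr x / (x/3) powr x"
    using G x by (intro divide_left_mono) auto
  also have "\<dots> = (3 * pi) powr x"
    using x by (simp add: powr_mult powr_divide field_simps)
  finally have "(pi * x) powr x / Gamma (x + 1) * (31/15) \<le> (3 * pi) powr x * (16 / (3 * pi)) powr x"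
    using sixteen_div_three_pi_powr_ge[OF x] by (intro mult_mono) auto
  also have "\<dots> = 16 powr x" by (simp add: powr_mult[symmetric])
  finally show ?thesis .
qed

(* 31/15 bounds the number of lattice balls per grid cell, ((N + 1)^m + N^m) / N^m,
   once N >= 16 m; see lattice_balls_cost_le. *)
lemma hausdorff_const_sqrt_half_pow_le:
  assumes "m \<ge> 1"
  shows "hausdorff_const m * sqrt (real m / 2) ^ m * (31/15) \<le> 2 ^ m"
proof -
  consider "m = 1" | "m = 2" | "m \<ge> 3" using assms by linarith
  then show ?thesis
  proof cases
    case 1
    have "sqrt (1/2::real) \<le> sqrt 0.5041" by (rule real_sqrt_le_mono) simp
    also have "sqrt (0.5041::real) = 0.71"
      by (rule real_sqrt_unique) (simp_all add: power2_eq_square)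
    finally show ?thesis
      using 1 Gamma_three_halves by (simp add: hausdorff_const_def powr_half_sqrt)
  next
    case 2
    then show ?thesis using Gamma_two pi_less_4 by (simp add: hausdorff_const_def)
  next
    case 3
    define x where "x = real m / 2"
    have x: "x \<ge> 3/2" using 3 by (simp add: x_def)
    have "sqrt (real m / 2) ^ m = (x powr (1/2)) ^ m" by (simp add: x_def powr_half_sqrt)
    also have "\<dots> = x powr x" using x by (simp add: powr_powr x_def flip: powr_realpow)
    finally have sqrt_pow: "sqrt (real m / 2) ^ m = x powr x" .
    have two_pow: "(2::real) ^ m = 4 powr x" and sixteen: "(16::real) powr x = 4 powr x * 4 powr x"
      by (simp_all add: x_def powr_powr flip: powr_realpow powr_mult)
    have "hausdorff_const m * sqrt (real m / 2) ^ m * (31/15)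
          = (pi * x) powr x / Gamma (x + 1) * (31/15) / 4 powr x"
      unfolding sqrt_pow by (simp add: hausdorff_const_def two_pow powr_mult mult_ac flip: x_def)
    also have "\<dots> \<le> 16 powr x / 4 powr x"
      using Gamma_half_nat_ge_powr[OF assms] x
      by (intro divide_right_mono pi_mul_powr_div_Gamma_le) (simp_all add: x_def)
    also have "\<dots> = 2 ^ m" by (simp add: sixteen two_pow)
    finally show ?thesis .
  qed
qed

lemma one_plus_inverse_pow_le:
  assumes "N \<ge> 16 * m" and "m \<ge> 1"
  shows "(1 + 1 / real N) ^ m \<le> 16/15"
proof -
  have N: "real N > 0" using assms by simp
  have "(1 + 1 / real N) ^ m \<le> exp (1 / real N) ^ m"
    using exp_ge_add_one_self[of "1 / real N"] by (intro power_mono) auto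
  also have "\<dots> = exp (real m / real N)" by (simp add: exp_of_nat_mult[symmetric])
  also have "\<dots> \<le> exp (1/16)"
    using assms N by (simp add: divide_simps)
  also have "\<dots> \<le> 16/15"
    using exp_ge_add_one_self[of "-(1/16)"] by (simp add: exp_minus field_simps)
  finally show ?thesis .
qed

section \<open>Covering a codimension-one cube by balls\<close>

lemma has_fine_cover_balls:
  fixes c :: "'j \<Rightarrow> 'a::euclidean_space"
  assumes K: "finite K" and A: "A \<subseteq> (\<Union>j\<in>K. cball (c j) R)" and R: "0 \<le> R" "2 * R \<le> \<delta>"
    and b: "real (card K) * (hausdorff_const s * (2 * R) ^ s) \<le> b"
  shows "has_fine_cover s \<delta> A (ennreal b)"
proof -
  define F where "F = (\<lambda>j. cball (c j) R) ` K"
  have "(\<Sum>U\<in>F. hcontrib s U) = (\<Sum>U\<in>F. ennreal (hausdorff_const s * (2 * R) ^ s))"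
    using R by (intro sum.cong) (auto simp: F_def hcontrib_def)
  also have "\<dots> = of_nat (card F) * ennreal (hausdorff_const s * (2 * R) ^ s)"
    by (rule sum_constant)
  also have "\<dots> \<le> ennreal (real (card K) * (hausdorff_const s * (2 * R) ^ s))"
    using card_image_le[OF K, of "\<lambda>j. cball (c j) R"] R hausdorff_const_nonneg
    by (simp add: F_def ennreal_of_nat_eq_real_of_nat ennreal_mult' [symmetric] ennreal_leI mult_right_mono)
  also have "\<dots> \<le> ennreal b" using b by (rule ennreal_leI)
  finally show ?thesis
    unfolding has_fine_cover_def using K A R by (intro exI[of _ F]) (auto simp: F_def)
qed

definition hyperplane_cube :: "'n::finite \<Rightarrow> real \<Rightarrow> ('n \<Rightarrow> real) \<Rightarrow> real \<Rightarrow> (real ^ 'n) set" where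
  "hyperplane_cube i v a s = {x. x $ i = v \<and> (\<forall>l. l \<noteq> i \<longrightarrow> a l \<le> x $ l \<and> x $ l \<le> a l + s)}"

definition lattice_point ::
    "'n::finite \<Rightarrow> real \<Rightarrow> ('n \<Rightarrow> real) \<Rightarrow> real \<Rightarrow> real \<Rightarrow> ('n \<Rightarrow> nat) \<Rightarrow> real ^ 'n" where
  "lattice_point i v a h w k = (\<chi> l. if l = i then v else a l + h * (real (k l) + w))"

(* The body-centred lattice: grid points (offset 0, indices 0..N) and cell centres
   (offset 1/2, indices 0..N-1) of a grid of N^(d-1) cells. *)
definition lattice_index :: "'n \<Rightarrow> nat \<Rightarrow> (real \<times> ('n \<Rightarrow> nat)) set" where
  "lattice_index i N = {0} \<times> ((UNIV - {i}) \<rightarrow>\<^sub>E {..N}) \<union> {1/2} \<times> ((UNIV - {i}) \<rightarrow>\<^sub>E {..<N})"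

lemma finite_lattice_index: "finite (lattice_index (i :: 'n::finite) N)"
  by (simp add: lattice_index_def finite_PiE)

lemma card_lattice_index:
  "card (lattice_index (i :: 'n::finite) N) = (N + 1) ^ (CARD('n) - 1) + N ^ (CARD('n) - 1)"
proof -
  define P where "P n = (UNIV - {i}) \<rightarrow>\<^sub>E {..<n}" for n :: nat
  have "lattice_index i N = {0} \<times> P (Suc N) \<union> {1/2} \<times> P N"
    by (simp add: lattice_index_def P_def lessThan_Suc_atMost)
  moreover have "finite (P n)" and "card (P n) = n ^ (CARD('n) - 1)" for n
    by (simp_all add: P_def finite_PiE card_PiE card_Diff_singleton)
  ultimately show ?thesis
    by (simp add: card_Un_disjoint card_cartesian_product disjoint_iff)
qed

lemma sq_dist_midpoint_nearest_endpoint_le: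
  fixes f :: real
  assumes "0 \<le> f" and "f \<le> 1"
  shows "(f - 1/2)\<^sup>2 + (f - (if f \<le> 1/2 then 0 else 1))\<^sup>2 \<le> 1/4"
proof (cases "f \<le> 1/2")
  case True
  have "f * (2*f - 1) \<le> 0" using True assms by (intro mult_nonneg_nonpos) auto
  then show ?thesis using True by (simp add: power2_eq_square algebra_simps)
next
  case False
  have "(2*f - 1) * (f - 1) \<le> 0" using False assms by (intro mult_nonneg_nonpos) auto
  then show ?thesis using False by (simp add: power2_eq_square algebra_simps)
qed

lemma body_centred_lattice_cover:
  fixes t :: "'n \<Rightarrow> real" and N :: nat
  assumes N: "N \<ge> 1" and t: "\<forall>l\<in>L. 0 \<le> t l \<and> t l \<le> real N"
  obtains k where "k \<in> L \<rightarrow>\<^sub>E {..N}" and "(\<Sum>l\<in>L. (t l - real (k l))\<^sup>2) \<le> real (card L) / 8"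
    | k where "k \<in> L \<rightarrow>\<^sub>E {..<N}" and "(\<Sum>l\<in>L. (t l - (real (k l) + 1/2))\<^sup>2) \<le> real (card L) / 8"
proof -
  define c where "c l = min (nat \<lfloor>t l\<rfloor>) (N - 1)" for l
  define f where "f l = t l - real (c l)" for l
  define e :: "'n \<Rightarrow> nat" where "e l = (if f l \<le> 1/2 then 0 else 1)" for l
  have f: "0 \<le> f l \<and> f l \<le> 1" if "l \<in> L" for l
    using t that N by (auto simp: f_def c_def min_def) linarith+
  have c: "c l < N" for l using N by (simp add: c_def)
  \<comment> \<open>The squared distances to the nearest grid point and to the centre of the cell add up
     to at most card L / 4, so one of them is at most card L / 8.\<close>
  have "(\<Sum>l\<in>L. (t l - real (c l + e l))\<^sup>2) + (\<Sum>l\<in>L. (t l - (real (c l) + 1/2))\<^sup>2)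
        \<le> (\<Sum>l\<in>L. 1/4)"
    unfolding sum.distrib[symmetric]
  proof (rule sum_mono)
    fix l assume "l \<in> L"
    have corner: "t l - real (c l + e l) = f l - (if f l \<le> 1/2 then 0 else 1)"
      and centre: "t l - (real (c l) + 1/2) = f l - 1/2"
      by (simp_all add: f_def e_def)
    show "(t l - real (c l + e l))\<^sup>2 + (t l - (real (c l) + 1/2))\<^sup>2 \<le> 1/4"
      unfolding corner centre using sq_dist_midpoint_nearest_endpoint_le[of "f l"] f[OF \<open>l \<in> L\<close>] by linarith
  qed
  then consider "(\<Sum>l\<in>L. (t l - real (c l + e l))\<^sup>2) \<le> real (card L) / 8"
    | "(\<Sum>l\<in>L. (t l - (real (c l) + 1/2))\<^sup>2) \<le> real (card L) / 8"
    by simp linarith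
  moreover have "restrict (\<lambda>l. c l + e l) L \<in> L \<rightarrow>\<^sub>E {..N}" and "restrict c L \<in> L \<rightarrow>\<^sub>E {..<N}"
    using c by (auto simp: e_def Suc_leI less_imp_le_nat)
  ultimately show ?thesis
    using that[of "restrict (\<lambda>l. c l + e l) L"] that[of "restrict c L"]
    by (auto cong: sum.cong_simp)
qed

lemma dist_vec_sq_sum: "(dist x y)\<^sup>2 = (\<Sum>l\<in>UNIV. (x $ l - y $ l)\<^sup>2)"
  for x y :: "real ^ 'n::finite"
  by (simp add: dist_vec_def L2_set_def dist_real_def sum_nonneg)

lemma dist_lattice_point_sq:
  fixes x :: "real ^ 'n::finite"
  assumes "x $ i = v" and "h > 0"
  shows "(dist x (lattice_point i v a h w k))\<^sup>2
           = h\<^sup>2 * (\<Sum>l\<in>UNIV - {i}. ((x $ l - a l) / h - (real (k l) + w))\<^sup>2)"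
proof -
  have "(x $ l - lattice_point i v a h w k $ l)\<^sup>2
        = (if l = i then 0 else h\<^sup>2 * ((x $ l - a l) / h - (real (k l) + w))\<^sup>2)" for l
    using assms by (simp add: lattice_point_def power2_eq_square field_simps)
  then show ?thesis
    by (simp add: dist_vec_sq_sum sum.remove[of UNIV i] sum_distrib_left cong: sum.cong_simp)
qed

lemma hyperplane_cube_subset_lattice_balls:
  fixes i :: "'n::finite"
  assumes h: "h > 0" and N: "N \<ge> 1"
  defines "R \<equiv> h * sqrt (real (CARD('n) - 1) / 2) / 2"
  shows "hyperplane_cube i v a (h * real N) \<subseteq>
           (\<Union>(w, k) \<in> lattice_index i N. cball (lattice_point i v a h w k) R)"
proof
  fix x assume x: "x \<in> hyperplane_cube i v a (h * real N)"
  define t where "t l = (x $ l - a l) / h" for l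
  have t_range: "\<forall>l\<in>UNIV - {i}. 0 \<le> t l \<and> t l \<le> real N"
    using x h by (auto simp: hyperplane_cube_def t_def pos_divide_le_eq mult.commute)
  have close: "x \<in> cball (lattice_point i v a h w k) R"
    if "(\<Sum>l\<in>UNIV - {i}. (t l - (real (k l) + w))\<^sup>2) \<le> real (card (UNIV - {i})) / 8" for w k
  proof -
    have "(dist x (lattice_point i v a h w k))\<^sup>2 \<le> h\<^sup>2 * (real (CARD('n) - 1) / 8)"
      using that x h by (simp add: dist_lattice_point_sq hyperplane_cube_def card_Diff_singleton t_def)
    also have "\<dots> = R\<^sup>2" by (simp add: R_def power_mult_distrib power_divide)
    finally have "dist x (lattice_point i v a h w k) \<le> R"
      by (rule power2_le_imp_le) (use h in \<open>simp add: R_def\<close>)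
    then show ?thesis by (simp add: dist_commute)
  qed
  from N t_range show "x \<in> (\<Union>(w, k) \<in> lattice_index i N. cball (lattice_point i v a h w k) R)"
  proof (cases rule: body_centred_lattice_cover)
    case (1 k)
    then show ?thesis using close[of k 0] by (force simp: lattice_index_def)
  next
    case (2 k)
    then show ?thesis using close[of k "1/2"] by (force simp: lattice_index_def)
  qed
qed

lemma lattice_balls_cost_le:
  fixes m N :: nat and h :: real
  assumes m: "m \<ge> 1" and N: "N \<ge> 16 * m" and h: "h \<ge> 0"
  shows "real ((N + 1) ^ m + N ^ m) * (hausdorff_const m * (h * sqrt (real m / 2)) ^ m)
           \<le> (2 * (h * real N)) ^ m"
proof -
  have N_pos: "real N > 0" using m N by simp
  have "real ((N + 1) ^ m) = real N ^ m * (1 + 1 / real N) ^ m"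
    using N_pos by (simp add: field_simps flip: power_mult_distrib)
  also have "\<dots> \<le> real N ^ m * (16/15)"
    using one_plus_inverse_pow_le[OF N m] by (intro mult_left_mono) auto
  finally have "real ((N + 1) ^ m + N ^ m) \<le> real N ^ m * (31/15)" by simp
  then have "real ((N + 1) ^ m + N ^ m) * (hausdorff_const m * (h * sqrt (real m / 2)) ^ m)
             \<le> real N ^ m * (31/15) * (hausdorff_const m * (h * sqrt (real m / 2)) ^ m)"
    using h hausdorff_const_nonneg by (intro mult_right_mono) auto
  also have "\<dots> = (h * real N) ^ m * (hausdorff_const m * sqrt (real m / 2) ^ m * (31/15))"
    by (simp add: power_mult_distrib)
  also have "\<dots> \<le> (h * real N) ^ m * 2 ^ m"
    using hausdorff_const_sqrt_half_pow_le[OF m] h by (intro mult_left_mono) auto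
  finally show ?thesis by (simp add: power_mult_distrib mult_ac)
qed

lemma has_fine_cover_hyperplane_cube:
  fixes i :: "'n::finite"
  assumes \<delta>: "\<delta> > 0" and s: "s > 0" and dim: "CARD('n) \<ge> 2"
  shows "has_fine_cover (CARD('n) - 1) \<delta> (hyperplane_cube i v a s) (ennreal ((2 * s) ^ (CARD('n) - 1)))"
proof -
  define m where "m = CARD('n) - 1"
  define M where "M = nat \<lceil>s / \<delta>\<rceil> + 1"
  define N where "N = 16 * m * M"
  define h where "h = s / real N"
  define R where "R = h * sqrt (real m / 2) / 2"
  have m: "m \<ge> 1" using dim by (simp add: m_def)
  have M: "s / \<delta> < real M" by (simp add: M_def) linarith
  have N: "N \<ge> 16 * m" and N1: "N \<ge> 1" using m by (simp_all add: N_def M_def)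
  have h: "h > 0" and s_eq: "s = h * real N" using s N1 by (simp_all add: h_def)
  have "2 * R \<le> h * real m"
  proof -
    have "sqrt (real m / 2) \<le> sqrt ((real m)\<^sup>2)"
      using m by (intro real_sqrt_le_mono) (simp add: power2_eq_square)
    then show ?thesis using h by (simp add: R_def)
  qed
  also have "h * real m = s / (16 * real M)"
    using m by (simp add: h_def N_def)
  also have "\<dots> < \<delta>"
    using M s \<delta> by (simp add: divide_less_eq pos_divide_less_eq mult.commute)
  finally have small: "2 * R \<le> \<delta>" by simp
  show ?thesis
    unfolding m_def[symmetric]
  proof (rule has_fine_cover_balls[OF finite_lattice_index])
    show "hyperplane_cube i v a s \<subseteq> (\<Union>p\<in>lattice_index i N. cball (case_prod (lattice_point i v a h) p) R)"
      using hyperplane_cube_subset_lattice_balls[OF h N1, of i v a]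
      by (simp add: s_eq R_def m_def split_beta')
    show "real (card (lattice_index i N)) * (hausdorff_const m * (2 * R) ^ m) \<le> (2 * s) ^ m"
      using lattice_balls_cost_le[OF m N, of h] h by (simp add: card_lattice_index R_def s_eq m_def)
  qed (use h small in \<open>simp_all add: R_def\<close>)
qed

lemma has_fine_cover_hyperplane_cube_dim1:
  fixes i :: "'n::finite"
  assumes "\<delta> > 0" and "CARD('n) = 1"
  shows "has_fine_cover 0 \<delta> (hyperplane_cube i v a s) 1"
proof -
  have all: "l = i" for l :: 'n
    using assms(2) card_le_Suc0_iff_eq[of "UNIV :: 'n set"] by auto
  have "hyperplane_cube i v a s \<subseteq> \<Union>{{\<chi> _. v}}"
  proof
    fix x assume "x \<in> hyperplane_cube i v a s"
    then have "x $ l = v" for l using all[of l] by (simp add: hyperplane_cube_def)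
    then show "x \<in> \<Union>{{\<chi> _. v}}" by (simp add: vec_eq_iff)
  qed
  moreover have "hcontrib 0 {\<chi> _. v :: real ^ 'n} = 1"
    using Gamma_fact[of 0] by (simp add: hcontrib_def hausdorff_const_def)
  ultimately show ?thesis
    unfolding has_fine_cover_def using assms(1) by (intro exI[of _ "{{\<chi> _. v}}"]) auto
qed

section \<open>Dyadic ancestors and mid-slices\<close>

definition dyadic_ancestor :: "nat \<Rightarrow> 'n dnode \<Rightarrow> 'n dnode" where
  "dyadic_ancestor k q = (k, \<lambda>l. snd q l div 2 ^ (fst q - k))"

definition mid_slice :: "'n::finite dnode \<Rightarrow> 'n \<Rightarrow> (real ^ 'n) set" where
  "mid_slice q i = {x \<in> dyadic_cube q. x $ i = (real (snd q i) + 1/2) / 2 ^ fst q}"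

lemma dyadic_ancestor_self [simp]: "dyadic_ancestor (fst q) q = q"
  by (simp add: dyadic_ancestor_def)

lemma fst_dyadic_ancestor [simp]: "fst (dyadic_ancestor k q) = k"
  by (simp add: dyadic_ancestor_def)

lemma dyadic_parent_ancestor:
  assumes "k < fst q"
  shows "dyadic_parent (dyadic_ancestor (Suc k) q) = dyadic_ancestor k q"
proof -
  have "(2::nat) ^ (fst q - k) = 2 ^ (fst q - Suc k) * 2"
    using assms by (simp add: Suc_diff_Suc flip: power_Suc2)
  then show ?thesis using assms by (auto simp: dyadic_parent_def dyadic_ancestor_def div_mult2_eq)
qed

lemma dyadic_ancestor_parent:
  assumes "k < fst q"
  shows "dyadic_ancestor k (dyadic_parent q) = dyadic_ancestor k q"
proof -
  have "(2::nat) ^ (fst q - k) = 2 * 2 ^ (fst q - 1 - k)"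
    using assms by (simp add: Suc_diff_Suc flip: power_Suc)
  then show ?thesis using assms by (auto simp: dyadic_parent_def dyadic_ancestor_def div_mult2_eq)
qed

lemma dyadic_ancestor_ancestor:
  assumes "k \<le> j" and "j \<le> fst q"
  shows "dyadic_ancestor k (dyadic_ancestor j q) = dyadic_ancestor k q"
proof -
  have "(2::nat) ^ (fst q - k) = 2 ^ (fst q - j) * 2 ^ (j - k)"
    using assms by (simp flip: power_add)
  then show ?thesis using assms by (auto simp: dyadic_ancestor_def div_mult2_eq)
qed

lemma dyadic_ancestor_in_nodes:
  assumes "q \<in> dyadic_nodes" and "k \<le> fst q"
  shows "dyadic_ancestor k q \<in> dyadic_nodes"
proof -
  have "snd q l < 2 ^ k * 2 ^ (fst q - k)" for l
    using assms by (auto simp: dyadic_nodes_def simp flip: power_add)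
  then show ?thesis
    by (auto simp: dyadic_nodes_def dyadic_ancestor_def intro: less_mult_imp_div_less)
qed

lemma proper_subtree_ancestor:
  assumes T: "proper_subtree T" and q: "q \<in> T" and k: "k \<le> fst q"
  shows "dyadic_ancestor k q \<in> T"
  using k
proof (induction k rule: inc_induct)
  case base
  then show ?case using q by simp
next
  case (step k)
  have "dyadic_ancestor (Suc k) q \<noteq> dyadic_root" by (simp add: dyadic_ancestor_def dyadic_root_def)
  with step.IH T have "dyadic_parent (dyadic_ancestor (Suc k) q) \<in> T"
    unfolding proper_subtree_def by blast
  then show ?case using dyadic_parent_ancestor[of k q] step.hyps by simp
qed

lemma outer_leaf_ancestor:
  assumes "proper_subtree T" and "q \<in> outer_leaves T" and "k < fst q"
  shows "dyadic_ancestor k q \<in> T"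
proof -
  have "dyadic_ancestor k (dyadic_parent q) \<in> T"
    using assms by (intro proper_subtree_ancestor) (auto simp: outer_leaves_def dyadic_parent_def)
  then show ?thesis using dyadic_ancestor_parent[OF assms(3)] by simp
qed

lemma real_div_interval_bounds:
  fixes a p :: nat
  assumes "p > 0"
  shows "real (a div p) * real p \<le> real a" and "real a + 1 \<le> (real (a div p) + 1) * real p"
proof -
  have "a div p * p \<le> a" and "a + 1 \<le> (a div p + 1) * p"
    using mod_less_divisor[OF assms, of a] div_mult_mod_eq[of a p] unfolding distrib_right by linarith+
  then have "real (a div p * p) \<le> real a" and "real (a + 1) \<le> real ((a div p + 1) * p)"
    by (simp_all only: of_nat_le_iff)
  then show "real (a div p) * real p \<le> real a" and "real a + 1 \<le> (real (a div p) + 1) * real p"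
    by (simp_all add: distrib_right)
qed

lemma dyadic_cube_subset_ancestor:
  fixes q :: "'n::finite dnode"
  assumes "k \<le> fst q"
  shows "dyadic_cube q \<subseteq> dyadic_cube (dyadic_ancestor k q)"
proof
  fix x assume x: "x \<in> dyadic_cube q"
  define p :: nat where "p = 2 ^ (fst q - k)"
  have p: "p > 0" and pow: "(2::real) ^ fst q = 2 ^ k * real p"
    using assms by (simp_all add: p_def flip: power_add)
  have "real (snd q l div p) / 2 ^ k \<le> x $ l \<and> x $ l \<le> (real (snd q l div p) + 1) / 2 ^ k" for l
  proof
    have "real (snd q l div p) / 2 ^ k = real (snd q l div p) * real p / 2 ^ fst q"
      using p pow by simp
    also have "\<dots> \<le> real (snd q l) / 2 ^ fst q"
      using real_div_interval_bounds(1)[OF p] by (intro divide_right_mono) auto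
    also have "\<dots> \<le> x $ l" using x by (simp add: dyadic_cube_def)
    finally show "real (snd q l div p) / 2 ^ k \<le> x $ l" .
    have "x $ l \<le> (real (snd q l) + 1) / 2 ^ fst q" using x by (simp add: dyadic_cube_def)
    also have "\<dots> \<le> (real (snd q l div p) + 1) * real p / 2 ^ fst q"
      using real_div_interval_bounds(2)[OF p] by (intro divide_right_mono) auto
    also have "\<dots> = (real (snd q l div p) + 1) / 2 ^ k"
      using p pow by simp
    finally show "x $ l \<le> (real (snd q l div p) + 1) / 2 ^ k" .
  qed
  then show "x \<in> dyadic_cube (dyadic_ancestor k q)"
    by (simp add: dyadic_cube_def dyadic_ancestor_def p_def)
qed

lemma odd_times_two_power_decomp:
  fixes n :: nat
  assumes "n > 0"
  shows "\<exists>u t. n = (2 * u + 1) * 2 ^ t"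
  using assms
proof (induction n rule: less_induct)
  case (less n)
  show ?case
  proof (cases "even n")
    case True
    then have half: "n = 2 * (n div 2)" and "0 < n div 2" "n div 2 < n"
      using less.prems by auto
    then obtain u t where "n div 2 = (2 * u + 1) * 2 ^ t"
      using less.IH by blast
    then have "n = (2 * u + 1) * 2 ^ Suc t" using half by simp
    then show ?thesis by blast
  next
    case False
    then have "n = (2 * (n div 2) + 1) * 2 ^ 0" by simp
    then show ?thesis by blast
  qed
qed

lemma interior_grid_point_in_mid_slice:
  fixes B :: "'n::finite dnode"
  assumes B: "B \<in> dyadic_nodes" and x: "x \<in> dyadic_cube B"
    and pos: "0 < snd B i" and xi: "x $ i = real (snd B i) / 2 ^ fst B"
  shows "\<exists>k < fst B. x \<in> mid_slice (dyadic_ancestor k B) i"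
proof -
  define j where "j = fst B"
  define n where "n = snd B i"
  \<comment> \<open>x lies halfway across the ancestor at level j - t - 1 in direction i.\<close>
  obtain u t where ut: "n = (2 * u + 1) * 2 ^ t"
    using odd_times_two_power_decomp pos unfolding n_def by blast
  have "(2::nat) ^ t \<le> n" using ut by simp
  also have "n < 2 ^ j" using B by (simp add: dyadic_nodes_def n_def j_def case_prod_beta)
  finally have tj: "t < j" by simp
  define k where "k = j - Suc t"
  have k: "k < j" and jk: "j = k + Suc t" using tj by (simp_all add: k_def)
  have u: "snd (dyadic_ancestor k B) i = u"
  proof -
    have "n = u * 2 ^ Suc t + 2 ^ t" using ut by simp
    then show ?thesis by (simp add: dyadic_ancestor_def jk n_def flip: j_def)
  qed
  have "x $ i = (real u + 1/2) / 2 ^ k"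
  proof -
    have "real n = (2 * real u + 1) * 2 ^ t" using ut by (simp add: algebra_simps)
    then show ?thesis by (simp add: xi jk power_add field_simps flip: n_def j_def)
  qed
  moreover have "x \<in> dyadic_cube (dyadic_ancestor k B)"
    using dyadic_cube_subset_ancestor[of k B] k x by (auto simp: j_def)
  ultimately show ?thesis using k u by (auto simp: mid_slice_def j_def)
qed

lemma same_level_common_point:
  fixes A B :: "'n::finite dnode"
  assumes lev: "fst A = fst B" and lt: "snd A i < snd B i"
    and "x \<in> dyadic_cube A" and "x \<in> dyadic_cube B"
  shows "x $ i = real (snd B i) / 2 ^ fst B"
proof -
  have "real (snd B i) / 2 ^ fst B \<le> x $ i" and "x $ i \<le> (real (snd A i) + 1) / 2 ^ fst B"
    using assms by (auto simp: dyadic_cube_def)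
  moreover have "(real (snd A i) + 1) / 2 ^ fst B \<le> real (snd B i) / 2 ^ fst B"
    using lt by (intro divide_right_mono) auto
  ultimately show ?thesis by linarith
qed

lemma same_level_in_mid_slice:
  fixes A B :: "'n::finite dnode"
  assumes A: "A \<in> dyadic_nodes" and B: "B \<in> dyadic_nodes" and lev: "fst A = fst B"
    and "A \<noteq> B" and xA: "x \<in> dyadic_cube A" and xB: "x \<in> dyadic_cube B"
  shows "\<exists>k < fst A. \<exists>i. \<exists>C\<in>{A, B}. x \<in> mid_slice (dyadic_ancestor k C) i"
proof -
  obtain i where "snd A i \<noteq> snd B i"
    using \<open>A \<noteq> B\<close> lev by (metis ext prod.expand)
  then consider "snd A i < snd B i" | "snd B i < snd A i" by linarith
  then show ?thesis
  proof cases
    case 1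
    then show ?thesis
      using interior_grid_point_in_mid_slice[OF B xB _ same_level_common_point[OF lev 1 xA xB]] lev
      by fastforce
  next
    case 2
    then show ?thesis
      using interior_grid_point_in_mid_slice[OF A xA _ same_level_common_point[OF lev[symmetric] 2 xB xA]]
      by fastforce
  qed
qed

lemma outer_leaves_common_point_in_mid_slice:
  fixes T :: "('n::finite) dnode set"
  assumes T: "proper_subtree T" and q1: "q1 \<in> outer_leaves T" and q2: "q2 \<in> outer_leaves T"
    and "q1 \<noteq> q2" and x1: "x \<in> dyadic_cube q1" and x2: "x \<in> dyadic_cube q2"
    and le: "fst q1 \<le> fst q2"
  shows "\<exists>q\<in>T. \<exists>i. x \<in> mid_slice q i"
proof -
  define r where "r = dyadic_ancestor (fst q1) q2"
  have nodes: "q1 \<in> dyadic_nodes" "r \<in> dyadic_nodes"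
    using q1 q2 le by (auto simp: outer_leaves_def r_def intro: dyadic_ancestor_in_nodes)
  have xr: "x \<in> dyadic_cube r" using dyadic_cube_subset_ancestor[OF le] x2 by (auto simp: r_def)
  have ancestors: "dyadic_ancestor k q1 \<in> T \<and> dyadic_ancestor k r \<in> T" if "k < fst q1" for k
    using that le outer_leaf_ancestor[OF T q1] outer_leaf_ancestor[OF T q2]
    by (simp add: r_def dyadic_ancestor_ancestor)
  have "r \<noteq> q1"
  proof (cases "fst q1 = fst q2")
    case True
    then show ?thesis using \<open>q1 \<noteq> q2\<close> by (simp add: r_def)
  next
    case False
    then have "r \<in> T" using le outer_leaf_ancestor[OF T q2] by (simp add: r_def)
    then show ?thesis using q1 by (auto simp: outer_leaves_def)
  qed
  moreover have "fst q1 = fst r" by (simp add: r_def)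
  ultimately obtain k i C where "k < fst q1" "C \<in> {q1, r}" "x \<in> mid_slice (dyadic_ancestor k C) i"
    using same_level_in_mid_slice[OF nodes _ _ x1 xr] by metis
  then show ?thesis using ancestors by blast
qed

lemma common_boundary_subset_mid_slices:
  fixes T :: "('n::finite) dnode set"
  assumes "proper_subtree T"
  shows "common_boundary (outer_leaves T) \<subseteq> (\<Union>p\<in>T \<times> UNIV. mid_slice (fst p) (snd p))"
proof
  fix x assume "x \<in> common_boundary (outer_leaves T)"
  then obtain q1 q2 where q: "q1 \<in> outer_leaves T" "q2 \<in> outer_leaves T" "q1 \<noteq> q2"
    "x \<in> dyadic_cube q1" "x \<in> dyadic_cube q2"
    by (auto simp: common_boundary_def)
  have "\<exists>q\<in>T. \<exists>i. x \<in> mid_slice q i"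
  proof (cases "fst q1 \<le> fst q2")
    case True
    then show ?thesis using outer_leaves_common_point_in_mid_slice[OF assms q] by blast
  next
    case False
    then show ?thesis
      using outer_leaves_common_point_in_mid_slice[OF assms q(2,1) q(3)[symmetric] q(5,4)] by simp
  qed
  then obtain q i where "q \<in> T" "x \<in> mid_slice q i" by blast
  then show "x \<in> (\<Union>p\<in>T \<times> UNIV. mid_slice (fst p) (snd p))" by (intro UN_I[of "(q, i)"]) auto
qed

section \<open>Counting nodes by level\<close>

lemma card_dyadic_level_le:
  fixes T :: "('n::finite) dnode set"
  assumes "T \<subseteq> dyadic_nodes"
  shows "card {q \<in> T. fst q = j} \<le> 2 ^ (j * CARD('n))"
proof -
  define C :: "('n \<Rightarrow> nat) set" where "C = UNIV \<rightarrow>\<^sub>E {..<2^j}"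
  have "{q \<in> T. fst q = j} \<subseteq> Pair j ` C"
    using assms by (force simp: dyadic_nodes_def C_def PiE_UNIV_domain)
  moreover have "finite C" by (simp add: C_def finite_PiE)
  ultimately have "card {q \<in> T. fst q = j} \<le> card C"
    by (meson card_image_le card_mono finite_imageI le_trans)
  also have "card C = 2 ^ (j * CARD('n))"
    by (simp add: C_def card_PiE power_mult)
  finally show ?thesis .
qed

lemma sum_low_levels_le:
  fixes T :: "('n::finite) dnode set"
  assumes "T \<subseteq> dyadic_nodes" and "finite T"
  shows "(\<Sum>q\<in>{q \<in> T. fst q \<le> J}. (1 / 2 ^ fst q :: real) ^ (CARD('n) - 1)) \<le> 2 ^ (J + 1)"
proof -
  define m where "m = CARD('n) - 1"
  have d: "CARD('n) = m + 1" by (simp add: m_def)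
  define L where "L = {q \<in> T. fst q \<le> J}"
  have "(\<Sum>q\<in>L. (1 / 2 ^ fst q :: real) ^ m)
        = (\<Sum>j\<le>J. \<Sum>q\<in>{q \<in> L. fst q = j}. (1 / 2 ^ fst q) ^ m)"
    using assms(2) by (intro sum.group[symmetric]) (auto simp: L_def)
  also have "\<dots> \<le> (\<Sum>j\<le>J. (2::real) ^ j)"
  proof (rule sum_mono)
    fix j assume "j \<in> {..J}"
    then have "{q \<in> L. fst q = j} = {q \<in> T. fst q = j}" by (auto simp: L_def)
    then have "(\<Sum>q\<in>{q \<in> L. fst q = j}. (1 / 2 ^ fst q) ^ m)
          = real (card {q \<in> T. fst q = j}) * (1 / 2 ^ j :: real) ^ m" by simp
    also have "\<dots> \<le> real (2 ^ (j * CARD('n))) * (1 / 2 ^ j) ^ m"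
      using card_dyadic_level_le[OF assms(1)] by (intro mult_right_mono) auto
    also have "\<dots> = 2 ^ j" by (simp add: d power_mult power_add power_divide)
    finally show "(\<Sum>q\<in>{q \<in> L. fst q = j}. (1 / 2 ^ fst q) ^ m) \<le> (2::real) ^ j" .
  qed
  also have "\<dots> \<le> 2 ^ (J + 1)" by (induction J) auto
  finally show ?thesis by (simp add: L_def m_def)
qed

lemma ex_dyadic_bracket:
  fixes N d :: nat
  assumes "N \<ge> 1" and "d \<ge> 1"
  shows "\<exists>J. 2 ^ (J * d) \<le> N \<and> N < 2 ^ ((J + 1) * d)"
proof -
  have "N < 2 ^ N" by (rule less_exp)
  also have "\<dots> \<le> 2 ^ (N * d)" using assms(2) by (intro power_increasing) auto
  finally obtain k where "\<forall>i\<le>k. \<not> N < 2 ^ (i * d)" "N < 2 ^ (Suc k * d)"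
    using ex_least_nat_less[of "\<lambda>J. N < 2 ^ (J * d)" N] assms(1) by auto
  then show ?thesis by (intro exI[of _ k]) auto
qed

lemma sum_face_areas_le:
  fixes T :: "('n::finite) dnode set"
  assumes "T \<subseteq> dyadic_nodes" and "finite T" and "T \<noteq> {}"
  shows "(\<Sum>q\<in>T. (1 / 2 ^ fst q :: real) ^ (CARD('n) - 1))
           \<le> 4 * real (card T) powr (1 / real CARD('n))"
proof -
  define d where "d = CARD('n)"
  define N where "N = card T"
  define m where "m = d - 1"
  define f where "f q = (1 / 2 ^ fst q :: real) ^ m" for q :: "'n dnode"
  have d: "d \<ge> 1" and dm: "d = m + 1" by (simp_all add: d_def m_def Suc_leI)
  have "N \<ge> 1" using assms(2,3) by (simp add: N_def Suc_leI card_gt_0_iff)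
  then obtain J where J: "2 ^ (J * d) \<le> N" "N < 2 ^ ((J + 1) * d)"
    using ex_dyadic_bracket d by blast
  have high: "sum f {q \<in> T. \<not> fst q \<le> J} \<le> 2 ^ (J + 1)"
  proof -
    have "sum f {q \<in> T. \<not> fst q \<le> J} \<le> (\<Sum>q\<in>{q \<in> T. \<not> fst q \<le> J}. (1 / 2 ^ (J + 1)) ^ m)"
      unfolding f_def by (intro sum_mono power_mono divide_left_mono power_increasing) auto
    also have "\<dots> \<le> real N * (1 / 2 ^ (J + 1)) ^ m"
      using assms(2) by (auto simp: N_def intro!: mult_right_mono card_mono)
    also have "\<dots> \<le> real (2 ^ ((J + 1) * d)) * (1 / 2 ^ (J + 1)) ^ m"
      using J(2) by (intro mult_right_mono) auto
    also have "\<dots> = 2 ^ (J + 1)"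
      by (simp add: dm power_mult power_add power_divide)
    finally show ?thesis .
  qed
  have "(2::real) ^ J = (2 ^ (J * d)) powr (1 / real d)"
    using d by (simp add: powr_realpow[symmetric] powr_powr)
  also have "\<dots> \<le> real N powr (1 / real d)"
    using J(1) by (intro powr_mono2) (auto simp flip: of_nat_le_iff)
  finally have "(2::real) ^ J \<le> real N powr (1 / real d)" .
  moreover have "sum f T = sum f {q \<in> T. fst q \<le> J} + sum f {q \<in> T. \<not> fst q \<le> J}"
    using assms(2) by (subst sum.union_disjoint[symmetric]) (auto intro: arg_cong[of _ _ "sum f"])
  ultimately show ?thesis
    using sum_low_levels_le[OF assms(1,2), of J] high
    by (simp add: f_def d_def m_def N_def)
qed

section \<open>Surface area of the common boundary\<close>

lemma has_fine_cover_mid_slice: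
  fixes q :: "'n::finite dnode"
  assumes "\<delta> > 0"
  shows "has_fine_cover (CARD('n) - 1) \<delta> (mid_slice q i)
           (ennreal (2 ^ (CARD('n) - 1) * (1 / 2 ^ fst q) ^ (CARD('n) - 1)))"
proof -
  have slice: "mid_slice q i \<subseteq> hyperplane_cube i ((real (snd q i) + 1/2) / 2 ^ fst q)
                 (\<lambda>l. real (snd q l) / 2 ^ fst q) (1 / 2 ^ fst q)"
    by (auto simp: mid_slice_def dyadic_cube_def hyperplane_cube_def add_divide_distrib)
  show ?thesis
  proof (cases "CARD('n) = 1")
    case True
    then show ?thesis
      using has_fine_cover_subset[OF has_fine_cover_hyperplane_cube_dim1[OF assms] slice] by simp
  next
    case False
    moreover have "CARD('n) > 0" by simp
    ultimately have "CARD('n) \<ge> 2" by linarith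
    then show ?thesis
      using has_fine_cover_subset[OF has_fine_cover_hyperplane_cube[OF assms] slice]
      by (simp add: power_divide)
  qed
qed

lemma hausdorff_measure_common_boundary_le:
  fixes T :: "('n::finite) dnode set"
  assumes "proper_subtree T" and "finite T"
  defines "d \<equiv> CARD('n)"
  shows "hausdorff_measure (d - 1) (common_boundary (outer_leaves T))
           \<le> ennreal (real d * 2 ^ (d - 1) * (\<Sum>q\<in>T. (1 / 2 ^ fst q) ^ (d - 1)))"
proof -
  define I where "I = T \<times> (UNIV :: 'n set)"
  define b where "b p = (2 ^ (d - 1) * (1 / 2 ^ fst (fst p)) ^ (d - 1) :: real)" for p :: "'n dnode \<times> 'n"
  have "hausdorff_measure (d - 1) (common_boundary (outer_leaves T)) \<le> (\<Sum>p\<in>I. ennreal (b p))"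
  proof (rule hausdorff_measure_le_fine_covers)
    fix \<delta> :: real assume "\<delta> > 0"
    then have "has_fine_cover (d - 1) \<delta> (mid_slice (fst p) (snd p)) (ennreal (b p))" for p
      unfolding d_def b_def by (rule has_fine_cover_mid_slice)
    then have "has_fine_cover (d - 1) \<delta> (\<Union>p\<in>I. mid_slice (fst p) (snd p)) (\<Sum>p\<in>I. ennreal (b p))"
      using assms(2) by (intro has_fine_cover_UN) (simp_all add: I_def)
    moreover have "common_boundary (outer_leaves T) \<subseteq> (\<Union>p\<in>I. mid_slice (fst p) (snd p))"
      unfolding I_def by (rule common_boundary_subset_mid_slices[OF assms(1)])
    ultimately show "has_fine_cover (d - 1) \<delta> (common_boundary (outer_leaves T)) (\<Sum>p\<in>I. ennreal (b p))"
      by (rule has_fine_cover_subset)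
  qed
  also have "(\<Sum>p\<in>I. ennreal (b p)) = ennreal (\<Sum>p\<in>I. b p)"
    by (rule sum_ennreal) (simp add: b_def)
  also have "(\<Sum>p\<in>I. b p) = real d * 2 ^ (d - 1) * (\<Sum>q\<in>T. (1 / 2 ^ fst q) ^ (d - 1))"
    by (simp add: I_def b_def sum.cartesian_product' d_def sum_distrib_left sum_distrib_right mult_ac)
  finally show ?thesis .
qed

theorem lemma4:
  fixes T :: "('n::finite) dnode set"
  assumes "proper_subtree T" and "finite T"
  shows "hausdorff_measure (CARD('n) - 1) (common_boundary (outer_leaves T))
           \<le> ennreal (2 ^ (CARD('n) + 1) * real CARD('n) * real (card T) powr (1 / real CARD('n)))"
proof -
  define d where "d = CARD('n)"
  have T: "T \<subseteq> dyadic_nodes" "T \<noteq> {}" using assms(1) by (auto simp: proper_subtree_def)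
  have "d + 1 = Suc (Suc (d - 1))" by (simp add: d_def)
  then have pow: "(2::real) ^ (d + 1) = 2 ^ (d - 1) * 4" unfolding \<open>d + 1 = _\<close> by simp
  have "hausdorff_measure (d - 1) (common_boundary (outer_leaves T))
          \<le> ennreal (real d * 2 ^ (d - 1) * (\<Sum>q\<in>T. (1 / 2 ^ fst q) ^ (d - 1)))"
    unfolding d_def by (rule hausdorff_measure_common_boundary_le[OF assms])
  also have "\<dots> \<le> ennreal (real d * 2 ^ (d - 1) * (4 * real (card T) powr (1 / real d)))"
    using sum_face_areas_le[OF T(1) assms(2) T(2)] by (intro ennreal_leI mult_left_mono) (auto simp: d_def)
  also have "\<dots> = ennreal (2 ^ (d + 1) * real d * real (card T) powr (1 / real d))"
    unfolding pow by (simp add: mult_ac)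
  finally show ?thesis by (simp add: d_def)
qed

end
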